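(* Let $\varphi,\varphi_0:\mathbb{R}^d\to\mathbb{R}$, $p$ a positive integer, $w\in\mathbb{R}^d$, and $\hat\varphi_p(x;w):=\sum_{i=0}^p\frac1{i!}\nabla^i\varphi(w)[x-w]^{\otimes i}$. Suppose $\nabla^p\varphi$ is Lipschitz, $x_\varphi\in\arg\min_x\varphi(x)+\varphi_0(x)$, and $$x_{\hat\varphi_p}\in\arg\min_x\hat\varphi_p(x;w)+\frac{\mathrm{Lip}(\nabla^p\varphi)}{(p+1)!}\|x-w\|_2^{p+1}+\varphi_0(x).$$ If $\hat\varphi_p(\cdot;w)+\frac{\mathrm{Lip}(\nabla^p\varphi)}{(p+1)!}\|\cdot-w\|_2^{p+1}+\varphi_0$ has $\nu(r)=\mu r^q$ gradient growth for some $\mu>0$ and $q>0$, then $$\|x_\varphi-x_{\hat\varphi_p}\|_2^{q-1}\le\frac{2\,\mathrm{Lip}(\nabla^p\varphi)}{\mu}\frac1{p!}\|x_\varphi-w\|_2^p.$$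
   Context: For a matrix or tensor $H$, $\|H\|_{op}:=\sup_{v\ne0}\|H[v]\|_{op}/\|v\|_2$ (with $\|v\|_{op}=\|v\|_2$ for vectors), and $\mathrm{Lip}(f):=\sup_{x\ne y}\|f(x)-f(y)\|_{op}/\|x-y\|_2$. A function $\psi$ has $\nu$ gradient growth if it is subdifferentiable and $\nu(\|x-y\|_2)\le\langle y-x,u-v\rangle$ for all $x,y\in\mathbb{R}^d$ and all $u\in\partial\psi(y)$, $v\in\partial\psi(x)$. *)

theory Defs
  imports "HOL-Analysis.Analysis"
begin

text \<open>Higher-order derivative as a multilinear form on lists of vectors:
  hderiv k f x [v1,...,vk] = nabla^k f(x)[v1,...,vk], defined by iterated
  Frechet derivatives: nabla^(k+1) f(x)[v, vs] = D(y |-> nabla^k f(y)[vs])(x)[v].\<close>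
fun hderiv :: "nat \<Rightarrow> ('a::real_normed_vector \<Rightarrow> real) \<Rightarrow> 'a \<Rightarrow> 'a list \<Rightarrow> real" where
  "hderiv 0 f x vs = f x"
| "hderiv (Suc k) f x vs = frechet_derivative (\<lambda>y. hderiv k f y (tl vs)) (at x) (hd vs)"

definition hdiff :: "nat \<Rightarrow> ('a::real_normed_vector \<Rightarrow> real) \<Rightarrow> bool" where
  "hdiff p f \<longleftrightarrow> (\<forall>k<p. \<forall>vs x. (\<lambda>y. hderiv k f y vs) differentiable (at x))"

fun tensor_opnorm :: "nat \<Rightarrow> ('a::real_normed_vector list \<Rightarrow> real) \<Rightarrow> real" where
  "tensor_opnorm 0 T = \<bar>T []\<bar>"
| "tensor_opnorm (Suc k) T = (SUP v\<in>-{0}. tensor_opnorm k (\<lambda>vs. T (v # vs)) / norm v)"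

definition lip_quotients :: "nat \<Rightarrow> ('a::real_normed_vector \<Rightarrow> real) \<Rightarrow> real set" where
  "lip_quotients p f = {tensor_opnorm p (\<lambda>vs. hderiv p f x vs - hderiv p f y vs) / dist x y | x y. x \<noteq> y}"

definition Lip_hderiv :: "nat \<Rightarrow> ('a::real_normed_vector \<Rightarrow> real) \<Rightarrow> real" where
  "Lip_hderiv p f = Sup (lip_quotients p f)"

definition taylor :: "nat \<Rightarrow> ('a::real_normed_vector \<Rightarrow> real) \<Rightarrow> 'a \<Rightarrow> 'a \<Rightarrow> real" where
  "taylor p f w x = (\<Sum>i=0..p. (1 / fact i) * hderiv i f w (replicate i (x - w)))"

definition subdiff :: "('a::real_inner \<Rightarrow> real) \<Rightarrow> 'a \<Rightarrow> 'a set" where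
  "subdiff f x = {g. \<forall>y. f x + inner g (y - x) \<le> f y}"

definition gradient_growth :: "(real \<Rightarrow> real) \<Rightarrow> ('a::real_inner \<Rightarrow> real) \<Rightarrow> bool" where
  "gradient_growth \<nu> \<psi> \<longleftrightarrow> (\<forall>x. subdiff \<psi> x \<noteq> {}) \<and>
     (\<forall>x y u v. u \<in> subdiff \<psi> y \<longrightarrow> v \<in> subdiff \<psi> x \<longrightarrow> \<nu> (norm (x - y)) \<le> inner (y - x) (u - v))"

end

theory Submission
  imports Defs
begin

(* Write psi for the regularised model and h = psi - (phi + phi0)
   = taylor + L/(p+1)! |. - w|^(p+1) - phi, a differentiable function.  Since x_phi minimises
   phi + phi0, psi - psi x_phi dominates h - h x_phi; as psi has subgradients everywhere it is
   convex, and the domination makes the gradient of h at x_phi a subgradient of psi at x_phi.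
   Since 0 is a subgradient at the model minimiser xh, gradient growth gives
   mu |x_phi - xh|^q <= <grad h(x_phi), x_phi - xh>.  Finally |grad h(x_phi)| <= 2 L/p! |x_phi - w|^p:
   the gradient of the Taylor polynomial approximates grad phi(x_phi) to within L/p! |x_phi - w|^p by
   Taylor's theorem along the segment from w (the p-th derivative being L-Lipschitz), and the
   gradient of the regulariser has exactly this size.  Differentiating the Taylor polynomial needs
   the symmetry of iterated derivatives (Schwarz). *)

section \<open>Symmetry of second derivatives\<close>

lemma second_difference_mean_value:
  fixes g :: "'a::real_normed_vector \<Rightarrow> real"
  assumes g: "\<And>z. (g has_derivative g' z) (at z)" and "0 < h"
  obtains \<xi> where "0 < \<xi>" "\<xi> < h"
    "g (y + h *\<^sub>R a + h *\<^sub>R b) - g (y + h *\<^sub>R a) - g (y + h *\<^sub>R b) + g y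
       = h * (g' (y + \<xi> *\<^sub>R a + h *\<^sub>R b) a - g' (y + \<xi> *\<^sub>R a) a)"
proof -
  define F where "F s = g (y + s *\<^sub>R a + h *\<^sub>R b) - g (y + s *\<^sub>R a)" for s
  define F' where "F' s = g' (y + s *\<^sub>R a + h *\<^sub>R b) a - g' (y + s *\<^sub>R a) a" for s
  have "DERIV F s :> F' s" for s
  proof -
    have lin: "linear (g' z)" for z
      using g has_derivative_linear by blast
    have d1: "((\<lambda>s. g (y + s *\<^sub>R a + h *\<^sub>R b)) has_derivative
        (\<lambda>t. g' (y + s *\<^sub>R a + h *\<^sub>R b) (t *\<^sub>R a))) (at s)"
      by (rule has_derivative_compose[OF _ g, where f="\<lambda>s. y + s *\<^sub>R a + h *\<^sub>R b"])
         (auto intro!: derivative_eq_intros)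
    have d2: "((\<lambda>s. g (y + s *\<^sub>R a)) has_derivative (\<lambda>t. g' (y + s *\<^sub>R a) (t *\<^sub>R a))) (at s)"
      by (rule has_derivative_compose[OF _ g, where f="\<lambda>s. y + s *\<^sub>R a"])
         (auto intro!: derivative_eq_intros)
    have "(\<lambda>t. g' (y + s *\<^sub>R a + h *\<^sub>R b) (t *\<^sub>R a) - g' (y + s *\<^sub>R a) (t *\<^sub>R a)) = (*) (F' s)"
      by (rule ext) (simp add: F'_def linear_scale[OF lin] algebra_simps)
    then show ?thesis
      using has_derivative_diff[OF d1 d2] unfolding F_def has_field_derivative_def by simp
  qed
  then obtain \<xi> where \<xi>: "0 < \<xi>" "\<xi> < h" and mvt: "F h - F 0 = (h - 0) * F' \<xi>"
    using MVT2[of 0 h F F'] \<open>0 < h\<close> by blast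
  show ?thesis
    by (rule that[OF \<xi>]) (use mvt in \<open>simp add: F_def F'_def algebra_simps\<close>)
qed

lemma second_difference_estimate:
  fixes g :: "'a::real_normed_vector \<Rightarrow> real"
  assumes g: "\<And>z. (g has_derivative g' z) (at z)" and "0 < h"
    and lin: "linear (\<lambda>u. D u a)"
    and near: "\<And>z. norm z \<le> h * (norm a + norm b) \<Longrightarrow> \<bar>g' (y + z) a - g' y a - D z a\<bar> \<le> c"
  shows "\<bar>(g (y + h *\<^sub>R a + h *\<^sub>R b) - g (y + h *\<^sub>R a) - g (y + h *\<^sub>R b) + g y) - h\<^sup>2 * D b a\<bar> \<le> 2 * h * c"
proof -
  obtain \<xi> where "0 < \<xi>" "\<xi> < h" and mvt:
    "g (y + h *\<^sub>R a + h *\<^sub>R b) - g (y + h *\<^sub>R a) - g (y + h *\<^sub>R b) + g y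
       = h * (g' (y + \<xi> *\<^sub>R a + h *\<^sub>R b) a - g' (y + \<xi> *\<^sub>R a) a)"
    using second_difference_mean_value[OF g \<open>0 < h\<close>] by blast
  have "\<xi> * norm a \<le> h * norm a"
    using \<open>\<xi> < h\<close> by (simp add: mult_right_mono)
  moreover have "norm (\<xi> *\<^sub>R a + h *\<^sub>R b) \<le> \<xi> * norm a + h * norm b"
    using norm_triangle_ineq[of "\<xi> *\<^sub>R a" "h *\<^sub>R b"] \<open>0 < \<xi>\<close> \<open>0 < h\<close> by simp
  moreover have "0 \<le> h * norm b" "norm (\<xi> *\<^sub>R a) = \<xi> * norm a"
    using \<open>0 < \<xi>\<close> \<open>0 < h\<close> by simp_all
  moreover have "h * (norm a + norm b) = h * norm a + h * norm b"
    by (simp add: distrib_left)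
  ultimately have "norm (\<xi> *\<^sub>R a + h *\<^sub>R b) \<le> h * (norm a + norm b)" "norm (\<xi> *\<^sub>R a) \<le> h * (norm a + norm b)"
    by linarith+
  then have "\<bar>g' (y + \<xi> *\<^sub>R a + h *\<^sub>R b) a - g' y a - D (\<xi> *\<^sub>R a + h *\<^sub>R b) a\<bar> \<le> c"
    and "\<bar>g' (y + \<xi> *\<^sub>R a) a - g' y a - D (\<xi> *\<^sub>R a) a\<bar> \<le> c"
    using near by (auto simp: add.assoc)
  moreover have "D (\<xi> *\<^sub>R a + h *\<^sub>R b) a - D (\<xi> *\<^sub>R a) a = h * D b a"
    by (simp add: linear_add[OF lin] linear_scale[OF lin])
  ultimately have "\<bar>(g' (y + \<xi> *\<^sub>R a + h *\<^sub>R b) a - g' (y + \<xi> *\<^sub>R a) a) - h * D b a\<bar> \<le> 2 * c"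
    by linarith
  then have "h * \<bar>(g' (y + \<xi> *\<^sub>R a + h *\<^sub>R b) a - g' (y + \<xi> *\<^sub>R a) a) - h * D b a\<bar> \<le> h * (2 * c)"
    using \<open>0 < h\<close> by (simp add: mult_left_mono)
  moreover have "(g (y + h *\<^sub>R a + h *\<^sub>R b) - g (y + h *\<^sub>R a) - g (y + h *\<^sub>R b) + g y) - h\<^sup>2 * D b a
      = h * ((g' (y + \<xi> *\<^sub>R a + h *\<^sub>R b) a - g' (y + \<xi> *\<^sub>R a) a) - h * D b a)"
    unfolding mvt by (simp add: power2_eq_square algebra_simps)
  ultimately show ?thesis
    using \<open>0 < h\<close> by (simp add: abs_mult mult_ac)
qed

lemma second_difference_tendsto:
  fixes g :: "'a::real_normed_vector \<Rightarrow> real"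
  assumes g: "\<And>z. (g has_derivative g' z) (at z)"
    and D: "\<And>v. ((\<lambda>z. g' z v) has_derivative (\<lambda>u. D u v)) (at y)"
  shows "((\<lambda>h. (g (y + h *\<^sub>R a + h *\<^sub>R b) - g (y + h *\<^sub>R a) - g (y + h *\<^sub>R b) + g y) / h\<^sup>2)
           \<longlongrightarrow> D b a) (at_right 0)"
proof -
  define \<Delta> where "\<Delta> h = g (y + h *\<^sub>R a + h *\<^sub>R b) - g (y + h *\<^sub>R a) - g (y + h *\<^sub>R b) + g y" for h
  have "((\<lambda>h. \<Delta> h / h\<^sup>2) \<longlongrightarrow> D b a) (at_right 0)"
  proof (rule tendstoI)
    fix \<epsilon> :: real assume "\<epsilon> > 0"
    define N where "N = norm a + norm b + 1"
    have "N > 0"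
      using norm_ge_zero[of a] norm_ge_zero[of b] unfolding N_def by linarith
    then have "\<epsilon> / (4 * N) > 0"
      using \<open>\<epsilon> > 0\<close> by simp
    then obtain \<delta> where "\<delta> > 0" and \<delta>: "\<And>z. norm (z - y) < \<delta> \<Longrightarrow>
        \<bar>g' z a - g' y a - D (z - y) a\<bar> \<le> \<epsilon> / (4 * N) * norm (z - y)"
      using D[of a] unfolding has_derivative_at_alt real_norm_def by blast
    show "\<forall>\<^sub>F h in at_right 0. dist (\<Delta> h / h\<^sup>2) (D b a) < \<epsilon>"
      unfolding eventually_at_right_field
    proof (intro exI[of _ "\<delta> / N"] conjI allI impI)
      show "0 < \<delta> / N"
        using \<open>\<delta> > 0\<close> \<open>N > 0\<close> by simp
      fix h :: real assume "0 < h" "h < \<delta> / N"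
      have "\<bar>g' (y + z) a - g' y a - D z a\<bar> \<le> \<epsilon> / 4 * h" if "norm z \<le> h * (norm a + norm b)" for z
      proof -
        have "h * (norm a + norm b) \<le> h * N" and "h * N < \<delta>"
          using \<open>0 < h\<close> \<open>h < \<delta> / N\<close> \<open>N > 0\<close> unfolding N_def by (simp_all add: field_simps)
        then have "\<bar>g' (y + z) a - g' y a - D z a\<bar> \<le> \<epsilon> / (4 * N) * norm z"
          using \<delta>[of "y + z"] that by simp
        also have "\<dots> \<le> \<epsilon> / (4 * N) * (h * N)"
          using that \<open>h * (norm a + norm b) \<le> h * N\<close> \<open>\<epsilon> / (4 * N) > 0\<close> by (intro mult_left_mono) auto
        finally show ?thesis
          using \<open>N > 0\<close> by simp
      qed
      from second_difference_estimate[where y = y and a = a and b = b and D = D,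
          OF g \<open>0 < h\<close> has_derivative_linear[OF D[of a]] this]
      have "\<bar>\<Delta> h - h\<^sup>2 * D b a\<bar> \<le> \<epsilon> / 2 * h\<^sup>2"
        unfolding \<Delta>_def by (simp add: power2_eq_square)
      moreover have "0 < h\<^sup>2"
        using \<open>0 < h\<close> by simp
      then have "dist (\<Delta> h / h\<^sup>2) (D b a) = \<bar>\<Delta> h - h\<^sup>2 * D b a\<bar> / h\<^sup>2"
        by (simp add: dist_real_def field_simps)
      ultimately have "dist (\<Delta> h / h\<^sup>2) (D b a) \<le> \<epsilon> / 2"
        using \<open>0 < h\<^sup>2\<close> by (simp add: pos_divide_le_eq)
      then show "dist (\<Delta> h / h\<^sup>2) (D b a) < \<epsilon>"
        using \<open>\<epsilon> > 0\<close> by linarith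
    qed
  qed
  then show ?thesis
    unfolding \<Delta>_def .
qed

lemma second_derivative_symmetric:
  fixes g :: "'a::real_normed_vector \<Rightarrow> real"
  assumes g: "\<And>z. (g has_derivative g' z) (at z)"
    and D: "\<And>v. ((\<lambda>z. g' z v) has_derivative (\<lambda>u. D u v)) (at y)"
  shows "D a b = D b a"
proof -
  have "(\<lambda>h. (g (y + h *\<^sub>R b + h *\<^sub>R a) - g (y + h *\<^sub>R b) - g (y + h *\<^sub>R a) + g y) / h\<^sup>2)
      = (\<lambda>h. (g (y + h *\<^sub>R a + h *\<^sub>R b) - g (y + h *\<^sub>R a) - g (y + h *\<^sub>R b) + g y) / h\<^sup>2)"
    by (simp add: algebra_simps)
  then show ?thesis
    using second_difference_tendsto[OF g D, of a b] second_difference_tendsto[OF g D, of b a]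
    by (intro tendsto_unique[of "at_right 0"]) auto
qed

section \<open>Taylor's theorem with Lipschitz remainder on the real line\<close>

lemma abs_le_by_derivative_bound:
  fixes r b :: "real \<Rightarrow> real"
  assumes "0 \<le> s" "r 0 = 0" "b 0 = 0"
    and r: "\<And>t. 0 \<le> t \<Longrightarrow> t \<le> s \<Longrightarrow> DERIV r t :> r' t"
    and b: "\<And>t. 0 \<le> t \<Longrightarrow> t \<le> s \<Longrightarrow> DERIV b t :> b' t"
    and bound: "\<And>t. 0 \<le> t \<Longrightarrow> t \<le> s \<Longrightarrow> \<bar>r' t\<bar> \<le> b' t"
  shows "\<bar>r s\<bar> \<le> b s"
proof -
  have "(\<lambda>t. b t - r t) 0 \<le> (\<lambda>t. b t - r t) s"
  proof (rule DERIV_nonneg_imp_nondecreasing[OF \<open>0 \<le> s\<close>])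
    fix t assume "0 \<le> t" "t \<le> s"
    then show "\<exists>y. DERIV (\<lambda>t. b t - r t) t :> y \<and> 0 \<le> y"
      using DERIV_diff[OF b r, of t] bound[of t] by (intro exI[of _ "b' t - r' t"]) (auto simp: abs_le_iff)
  qed
  moreover have "(\<lambda>t. b t + r t) 0 \<le> (\<lambda>t. b t + r t) s"
  proof (rule DERIV_nonneg_imp_nondecreasing[OF \<open>0 \<le> s\<close>])
    fix t assume "0 \<le> t" "t \<le> s"
    then show "\<exists>y. DERIV (\<lambda>t. b t + r t) t :> y \<and> 0 \<le> y"
      using DERIV_add[OF b r, of t] bound[of t] by (intro exI[of _ "b' t + r' t"]) (auto simp: abs_le_iff)
  qed
  ultimately show ?thesis
    using assms(2,3) by (simp add: abs_le_iff)
qed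

(* The Lagrange form of the remainder (MacLaurin.Taylor) would lose a factor n + 1 here. *)
lemma Taylor_Lipschitz_remainder:
  fixes F :: "nat \<Rightarrow> real \<Rightarrow> real"
  assumes "\<And>m t. m < n \<Longrightarrow> DERIV (F m) t :> F (Suc m) t"
    and "\<And>t. 0 \<le> t \<Longrightarrow> t \<le> T \<Longrightarrow> \<bar>F n t - F n 0\<bar> \<le> M * t"
    and "0 \<le> s" "s \<le> T"
  shows "\<bar>F 0 s - (\<Sum>j\<le>n. F j 0 * s ^ j / fact j)\<bar> \<le> M * s ^ Suc n / fact (Suc n)"
  using assms
proof (induction n arbitrary: F s)
  case 0
  then show ?case by simp
next
  case (Suc n)
  define r where "r t = F 0 t - (\<Sum>j\<le>Suc n. F j 0 * t ^ j / fact j)" for t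
  define r' where "r' t = F 1 t - (\<Sum>j\<le>n. F (Suc j) 0 * t ^ j / fact j)" for t
  have "DERIV r t :> r' t" for t
  proof -
    have "DERIV (\<lambda>t. \<Sum>j\<le>Suc n. F j 0 * t ^ j / fact j) t
        :> (\<Sum>j\<le>Suc n. F j 0 * (real j * t ^ (j - 1)) / fact j)"
      by (intro DERIV_sum) (auto intro!: derivative_eq_intros)
    moreover have "(\<Sum>j\<le>Suc n. F j 0 * (real j * t ^ (j - 1)) / fact j)
        = (\<Sum>j\<le>n. F (Suc j) 0 * t ^ j / fact j)"
      by (subst sum.atMost_Suc_shift) (auto simp del: sum.atMost_Suc simp add: fact_Suc intro!: sum.cong)
    ultimately show ?thesis
      unfolding r_def r'_def using Suc.prems(1)[of 0 t] by (auto intro: DERIV_diff)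
  qed
  moreover have "DERIV (\<lambda>t. M * t ^ Suc (Suc n) / fact (Suc (Suc n))) t :> M * t ^ Suc n / fact (Suc n)" for t
  proof -
    have "DERIV (\<lambda>t. t ^ Suc (Suc n)) t :> real (Suc (Suc n)) * t ^ Suc n"
      using DERIV_pow[of "Suc (Suc n)" t] by simp
    then have "DERIV (\<lambda>t. M * t ^ Suc (Suc n) / fact (Suc (Suc n))) t
        :> M * (real (Suc (Suc n)) * t ^ Suc n) / fact (Suc (Suc n))"
      by (intro DERIV_cdivide DERIV_cmult)
    moreover have "M * (real (Suc (Suc n)) * t ^ Suc n) / fact (Suc (Suc n)) = M * t ^ Suc n / fact (Suc n)"
      by (simp add: fact_Suc[of "Suc n"] del: fact_Suc)
    ultimately show ?thesis
      by simp
  qed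
  moreover have "\<bar>r' t\<bar> \<le> M * t ^ Suc n / fact (Suc n)" if "0 \<le> t" "t \<le> s" for t
    unfolding r'_def using Suc.IH[of "\<lambda>j. F (Suc j)" t] Suc.prems that by auto
  moreover have "r 0 = 0"
    unfolding r_def by (simp add: sum.atMost_shift)
  ultimately have "\<bar>r s\<bar> \<le> M * s ^ Suc (Suc n) / fact (Suc (Suc n))"
    by (intro abs_le_by_derivative_bound[OF Suc.prems(3)]) auto
  then show ?case
    unfolding r_def .
qed

section \<open>Multilinear forms\<close>

definition multilinear_form :: "nat \<Rightarrow> ('a::real_vector list \<Rightarrow> real) \<Rightarrow> bool" where
  "multilinear_form n M \<longleftrightarrow>
     (\<forall>xs ys. length xs + 1 + length ys = n \<longrightarrow> linear (\<lambda>v. M (xs @ v # ys)))"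

definition symmetric_form :: "nat \<Rightarrow> ('a list \<Rightarrow> real) \<Rightarrow> bool" where
  "symmetric_form n M \<longleftrightarrow>
     (\<forall>xs ys a b. length xs + 2 + length ys = n \<longrightarrow> M (xs @ a # b # ys) = M (xs @ b # a # ys))"

lemma multilinear_form_Cons:
  assumes "multilinear_form (Suc n) M"
  shows "multilinear_form n (\<lambda>vs. M (v # vs))"
  unfolding multilinear_form_def
proof (intro allI impI)
  fix xs ys :: "'a list" assume "length xs + 1 + length ys = n"
  then show "linear (\<lambda>u. M (v # xs @ u # ys))"
    using assms[unfolded multilinear_form_def, rule_format, of "v # xs" ys] by simp
qed

lemma multilinear_form_linear_hd:
  assumes "multilinear_form (Suc n) M" "length ys = n"
  shows "linear (\<lambda>v. M (v # ys))"
  using assms(1)[unfolded multilinear_form_def, rule_format, of "[]" ys] assms(2) by simp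

lemma multilinear_form_diff:
  assumes "multilinear_form n A" "multilinear_form n B"
  shows "multilinear_form n (\<lambda>vs. A vs - B vs)"
  using assms unfolding multilinear_form_def by (auto intro: linear_compose_sub)

lemma symmetric_form_Cons:
  assumes "symmetric_form (Suc n) M"
  shows "symmetric_form n (\<lambda>vs. M (v # vs))"
  unfolding symmetric_form_def
proof (intro allI impI)
  fix xs ys :: "'a list" and a b assume "length xs + 2 + length ys = n"
  then show "M (v # xs @ a # b # ys) = M (v # xs @ b # a # ys)"
    using assms[unfolded symmetric_form_def, rule_format, of "v # xs" ys] by simp
qed

lemma symmetric_form_swap_hd:
  assumes "symmetric_form (Suc (Suc n)) M" "length ys = n"
  shows "M (a # b # ys) = M (b # a # ys)"
  using assms(1)[unfolded symmetric_form_def, rule_format, of "[]" ys] assms(2) by simp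

lemma symmetric_form_replicate_move:
  assumes "symmetric_form n M" "k + 1 + m = n"
  shows "M (replicate k e @ d # replicate m e) = M (d # replicate (k + m) e)"
  using assms(2)
proof (induction k arbitrary: m)
  case 0
  then show ?case by simp
next
  case (Suc k)
  have "M (replicate (Suc k) e @ d # replicate m e) = M (replicate k e @ e # d # replicate m e)"
    by (simp add: replicate_append_same[symmetric])
  also have "\<dots> = M (replicate k e @ d # replicate (Suc m) e)"
    using assms(1) Suc.prems unfolding symmetric_form_def by simp
  also have "\<dots> = M (d # replicate (Suc k + m) e)"
    using Suc.IH[of "Suc m"] Suc.prems by simp
  finally show ?case .
qed

lemma linear_real_basis_expansion:
  fixes L :: "'a::euclidean_space \<Rightarrow> real"
  assumes "linear L"
  shows "L v = (\<Sum>b\<in>Basis. (v \<bullet> b) * L b)"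
  using Linear_Algebra.linear_componentwise[OF assms, of v 1] by simp

lemma has_derivative_symmetric_form_diagonal:
  fixes M :: "'a::euclidean_space list \<Rightarrow> real"
  assumes "multilinear_form (Suc n) M" "symmetric_form (Suc n) M"
  shows "((\<lambda>x. M (replicate (Suc n) x)) has_derivative (\<lambda>v. real (Suc n) * M (v # replicate n x))) (at x)"
  using assms
proof (induction n arbitrary: M x)
  case 0
  have "bounded_linear (\<lambda>v. M [v])"
    using multilinear_form_linear_hd[OF 0(1), of "[]"] by (simp add: linear_conv_bounded_linear)
  then show ?case
    using bounded_linear.has_derivative[OF _ has_derivative_ident] by simp
next
  case (Suc n)
  define Mb where "Mb b vs = M (b # vs)" for b vs
  have Mb: "multilinear_form (Suc n) (Mb b)" "symmetric_form (Suc n) (Mb b)" for b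
    unfolding Mb_def using multilinear_form_Cons[OF Suc.prems(1)] symmetric_form_Cons[OF Suc.prems(2)] by auto
  have expand: "M (u # vs) = (\<Sum>b\<in>Basis. (u \<bullet> b) * Mb b vs)" if "length vs = Suc n" for u vs
    unfolding Mb_def by (rule linear_real_basis_expansion[OF multilinear_form_linear_hd[OF Suc.prems(1) that]])
  have "((\<lambda>x. \<Sum>b\<in>Basis. (x \<bullet> b) * Mb b (replicate (Suc n) x)) has_derivative
      (\<lambda>v. \<Sum>b\<in>Basis. (x \<bullet> b) * (real (Suc n) * Mb b (v # replicate n x))
                       + (v \<bullet> b) * Mb b (replicate (Suc n) x))) (at x)"
    by (intro has_derivative_sum has_derivative_mult Suc.IH[OF Mb]
        has_derivative_inner_left[OF has_derivative_ident])
  moreover have "(\<lambda>x. M (replicate (Suc (Suc n)) x)) = (\<lambda>x. \<Sum>b\<in>Basis. (x \<bullet> b) * Mb b (replicate (Suc n) x))"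
    using expand by simp
  moreover have "(\<Sum>b\<in>Basis. (x \<bullet> b) * (real (Suc n) * Mb b (v # replicate n x))
                       + (v \<bullet> b) * Mb b (replicate (Suc n) x))
      = real (Suc (Suc n)) * M (v # replicate (Suc n) x)" for v
  proof -
    have "(\<Sum>b\<in>Basis. (x \<bullet> b) * (real (Suc n) * Mb b (v # replicate n x))
                       + (v \<bullet> b) * Mb b (replicate (Suc n) x))
        = real (Suc n) * (\<Sum>b\<in>Basis. (x \<bullet> b) * Mb b (v # replicate n x))
          + (\<Sum>b\<in>Basis. (v \<bullet> b) * Mb b (replicate (Suc n) x))"
      by (simp add: sum.distrib sum_distrib_left mult.left_commute)
    also have "\<dots> = real (Suc n) * M (x # v # replicate n x) + M (v # replicate (Suc n) x)"
      using expand[of "v # replicate n x" x] expand[of "replicate (Suc n) x" v] by simp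
    also have "M (x # v # replicate n x) = M (v # replicate (Suc n) x)"
      using symmetric_form_swap_hd[OF Suc.prems(2), of "replicate n x" x v] by simp
    finally show ?thesis
      by (simp add: algebra_simps)
  qed
  ultimately show ?case
    by simp
qed

lemma tensor_opnorm_le:
  fixes T :: "'a::euclidean_space list \<Rightarrow> real"
  assumes "\<And>vs. length vs = k \<Longrightarrow> \<bar>T vs\<bar> \<le> C * prod_list (map norm vs)"
  shows "tensor_opnorm k T \<le> C"
  using assms
proof (induction k arbitrary: T C)
  case 0
  then show ?case by simp
next
  case (Suc k)
  have "tensor_opnorm k (\<lambda>vs. T (v # vs)) / norm v \<le> C" if "v \<noteq> 0" for v
  proof -
    have "tensor_opnorm k (\<lambda>vs. T (v # vs)) \<le> C * norm v"
      by (rule Suc.IH) (use Suc.prems[of "v # _"] in \<open>simp add: mult.assoc\<close>)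
    then show ?thesis
      using that by (simp add: pos_divide_le_eq)
  qed
  moreover have "(SOME b. b \<in> Basis) \<in> - {0 :: 'a}"
    using SOME_Basis nonzero_Basis by auto
  ultimately show ?case
    by (auto intro!: cSUP_least)
qed

lemma multilinear_form_bounded:
  fixes T :: "'a::euclidean_space list \<Rightarrow> real"
  assumes "multilinear_form k T"
  shows "\<exists>C. \<forall>vs. length vs = k \<longrightarrow> \<bar>T vs\<bar> \<le> C * prod_list (map norm vs)"
  using assms
proof (induction k arbitrary: T)
  case 0
  then show ?case by auto
next
  case (Suc k)
  obtain C where C: "\<And>b vs. length vs = k \<Longrightarrow> \<bar>T (b # vs)\<bar> \<le> C b * prod_list (map norm vs)"
    using Suc.IH[OF multilinear_form_Cons[OF Suc.prems]] by metis
  have "\<bar>T vs\<bar> \<le> (\<Sum>b\<in>Basis. C b) * prod_list (map norm vs)" if "length vs = Suc k" for vs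
  proof -
    obtain v vs' where vs: "vs = v # vs'" and "length vs' = k"
      using \<open>length vs = Suc k\<close> by (cases vs) auto
    have "\<bar>T vs\<bar> = \<bar>\<Sum>b\<in>Basis. (v \<bullet> b) * T (b # vs')\<bar>"
      unfolding vs
      by (subst linear_real_basis_expansion[OF multilinear_form_linear_hd[OF Suc.prems \<open>length vs' = k\<close>]]) simp
    also have "\<dots> \<le> (\<Sum>b\<in>Basis. \<bar>v \<bullet> b\<bar> * \<bar>T (b # vs')\<bar>)"
      by (rule order_trans[OF sum_abs]) (simp add: abs_mult)
    also have "\<dots> \<le> (\<Sum>b\<in>Basis. norm v * (C b * prod_list (map norm vs')))"
      using C[OF \<open>length vs' = k\<close>] by (intro sum_mono mult_mono) (auto simp: Basis_le_norm)
    also have "\<dots> = (\<Sum>b\<in>Basis. C b) * prod_list (map norm vs)"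
      unfolding vs by (simp add: sum_distrib_left sum_distrib_right algebra_simps)
    finally show ?thesis .
  qed
  then show ?case by blast
qed

lemma bdd_above_tensor_opnorm_quotients:
  fixes T :: "'a::euclidean_space list \<Rightarrow> real"
  assumes "multilinear_form (Suc k) T"
  shows "bdd_above ((\<lambda>v. tensor_opnorm k (\<lambda>vs. T (v # vs)) / norm v) ` (- {0}))"
proof -
  obtain C where C: "\<And>vs. length vs = Suc k \<Longrightarrow> \<bar>T vs\<bar> \<le> C * prod_list (map norm vs)"
    using multilinear_form_bounded[OF assms] by blast
  have "tensor_opnorm k (\<lambda>vs. T (v # vs)) / norm v \<le> C" if "v \<noteq> 0" for v
  proof -
    have "tensor_opnorm k (\<lambda>vs. T (v # vs)) \<le> C * norm v"
      by (rule tensor_opnorm_le) (use C[of "v # _"] in \<open>simp add: mult.assoc\<close>)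
    then show ?thesis
      using that by (simp add: pos_divide_le_eq)
  qed
  then show ?thesis
    by (intro bdd_aboveI2[where M = C]) simp
qed

lemma tensor_opnorm_nonneg:
  fixes T :: "'a::euclidean_space list \<Rightarrow> real"
  assumes "multilinear_form k T"
  shows "0 \<le> tensor_opnorm k T"
  using assms
proof (induction k arbitrary: T)
  case 0
  then show ?case by simp
next
  case (Suc k)
  define b :: 'a where "b = (SOME b. b \<in> Basis)"
  have "b \<in> - {0}"
    unfolding b_def using SOME_Basis nonzero_Basis by auto
  have "0 \<le> tensor_opnorm k (\<lambda>vs. T (b # vs)) / norm b"
    using Suc.IH[OF multilinear_form_Cons[OF Suc.prems]] by simp
  also have "\<dots> \<le> tensor_opnorm (Suc k) T"
    using cSUP_upper[OF \<open>b \<in> - {0}\<close> bdd_above_tensor_opnorm_quotients[OF Suc.prems]] by simp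
  finally show ?case .
qed

lemma abs_le_tensor_opnorm:
  fixes T :: "'a::euclidean_space list \<Rightarrow> real"
  assumes "multilinear_form k T" "length vs = k"
  shows "\<bar>T vs\<bar> \<le> tensor_opnorm k T * prod_list (map norm vs)"
  using assms
proof (induction k arbitrary: T vs)
  case 0
  then show ?case by simp
next
  case (Suc k)
  then obtain v vs' where vs: "vs = v # vs'" and "length vs' = k"
    by (cases vs) auto
  show ?case
  proof (cases "v = 0")
    case True
    then have "T vs = 0"
      using linear_0[OF multilinear_form_linear_hd[OF Suc.prems(1) \<open>length vs' = k\<close>]] vs by simp
    then show ?thesis
      using vs True by simp
  next
    case False
    have "\<bar>T vs\<bar> \<le> tensor_opnorm k (\<lambda>ws. T (v # ws)) * prod_list (map norm vs')"
      using Suc.IH[OF multilinear_form_Cons[OF Suc.prems(1)] \<open>length vs' = k\<close>] vs by simp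
    also have "\<dots> = tensor_opnorm k (\<lambda>ws. T (v # ws)) / norm v * prod_list (map norm vs)"
      using False vs by simp
    also have "\<dots> \<le> tensor_opnorm (Suc k) T * prod_list (map norm vs)"
      using cSUP_upper[OF _ bdd_above_tensor_opnorm_quotients[OF Suc.prems(1)], of v] False
      by (intro mult_right_mono) (auto intro!: prod_list_nonneg)
    finally show ?thesis .
  qed
qed

section \<open>Iterated derivatives\<close>

declare hderiv.simps(2) [simp del]

lemma has_derivative_hderiv:
  assumes "hdiff p f" "k < p"
  shows "((\<lambda>y. hderiv k f y vs) has_derivative (\<lambda>v. hderiv (Suc k) f x (v # vs))) (at x)"
proof -
  have "(\<lambda>y. hderiv k f y vs) differentiable (at x)"
    using assms unfolding hdiff_def by blast
  then show ?thesis
    by (simp add: hderiv.simps frechet_derivative_works)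
qed

lemma hderiv_swap:
  assumes "hdiff p f" "length xs + 2 + length ys = k" "k \<le> p"
  shows "hderiv k f x (xs @ a # b # ys) = hderiv k f x (xs @ b # a # ys)"
  using assms(2,3)
proof (induction xs arbitrary: k x)
  case Nil
  then obtain m where k: "k = Suc (Suc m)" "m = length ys"
    by auto
  have "hderiv (Suc (Suc m)) f x (a # b # ys) = hderiv (Suc (Suc m)) f x (b # a # ys)"
    by (rule second_derivative_symmetric[where g="\<lambda>z. hderiv m f z ys"
          and g'="\<lambda>z v. hderiv (Suc m) f z (v # ys)" and D="\<lambda>u v. hderiv (Suc (Suc m)) f x (u # v # ys)"])
       (rule has_derivative_hderiv[OF assms(1)], use Nil.prems k in simp)+
  then show ?case
    using k by simp
next
  case (Cons z xs)
  then obtain k' where k: "k = Suc k'"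
    by (cases k) auto
  have "(\<lambda>y. hderiv k' f y (xs @ a # b # ys)) = (\<lambda>y. hderiv k' f y (xs @ b # a # ys))"
    using Cons.IH[of k'] Cons.prems k by auto
  then show ?case
    using k by (simp add: hderiv.simps)
qed

lemma symmetric_form_hderiv:
  assumes "hdiff p f" "k \<le> p"
  shows "symmetric_form k (hderiv k f x)"
  using hderiv_swap[OF assms(1) _ assms(2)] unfolding symmetric_form_def by blast

lemma linear_hderiv:
  assumes "hdiff p f" "length xs + 1 + length ys = k" "k \<le> p"
  shows "linear (\<lambda>v. hderiv k f x (xs @ v # ys))"
  using assms(2,3)
proof (induction xs arbitrary: k x)
  case Nil
  then obtain m where "k = Suc m" "m < p"
    by auto
  then show ?case
    using has_derivative_linear[OF has_derivative_hderiv[OF assms(1), of m ys x]] by simp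
next
  case (Cons z xs)
  then obtain k' where k: "k = Suc k'" and "k' < p"
    by (cases k) auto
  define G where "G v y = hderiv k' f y (xs @ v # ys)" for v y
  have lin: "linear (\<lambda>v. G v y)" for y
    using Cons.IH[of k' y] Cons.prems k unfolding G_def by auto
  have dG: "(G v has_derivative (\<lambda>u. hderiv (Suc k') f x (u # xs @ v # ys))) (at x)" for v
    unfolding G_def using has_derivative_hderiv[OF assms(1) \<open>k' < p\<close>] .
  show ?case
    unfolding k
  proof (rule linearI)
    fix v1 v2
    have "G (v1 + v2) = (\<lambda>y. G v1 y + G v2 y)"
      by (rule ext) (simp add: linear_add[OF lin])
    then have "(G (v1 + v2) has_derivative
        (\<lambda>u. hderiv (Suc k') f x (u # xs @ v1 # ys) + hderiv (Suc k') f x (u # xs @ v2 # ys))) (at x)"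
      using has_derivative_add[OF dG dG] by simp
    from has_derivative_unique[OF dG this]
    show "hderiv (Suc k') f x ((z # xs) @ (v1 + v2) # ys)
        = hderiv (Suc k') f x ((z # xs) @ v1 # ys) + hderiv (Suc k') f x ((z # xs) @ v2 # ys)"
      by (simp add: fun_eq_iff)
  next
    fix r v
    have "G (r *\<^sub>R v) = (\<lambda>y. r * G v y)"
      by (rule ext) (simp add: linear_scale[OF lin])
    then have "(G (r *\<^sub>R v) has_derivative (\<lambda>u. r * hderiv (Suc k') f x (u # xs @ v # ys))) (at x)"
      using has_derivative_mult_right[OF dG, of r] by simp
    from has_derivative_unique[OF dG this]
    show "hderiv (Suc k') f x ((z # xs) @ (r *\<^sub>R v) # ys) = r *\<^sub>R hderiv (Suc k') f x ((z # xs) @ v # ys)"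
      by (simp add: fun_eq_iff)
  qed
qed

lemma multilinear_form_hderiv:
  assumes "hdiff p f" "k \<le> p"
  shows "multilinear_form k (hderiv k f x)"
  using linear_hderiv[OF assms(1) _ assms(2)] unfolding multilinear_form_def by blast

lemma has_real_derivative_hderiv_line:
  assumes "hdiff p f" "k < p"
  shows "((\<lambda>s. hderiv k f (w + s *\<^sub>R e) vs) has_real_derivative hderiv (Suc k) f (w + s *\<^sub>R e) (e # vs)) (at s)"
proof -
  have D: "((\<lambda>x. hderiv k f x vs) has_derivative (\<lambda>v. hderiv (Suc k) f (w + s *\<^sub>R e) (v # vs))) (at (w + s *\<^sub>R e))"
    by (rule has_derivative_hderiv[OF assms])
  have "((\<lambda>s. w + s *\<^sub>R e) has_derivative (\<lambda>t. t *\<^sub>R e)) (at s)"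
    by (auto intro!: derivative_eq_intros)
  from has_derivative_compose[OF this D]
  have "((\<lambda>s. hderiv k f (w + s *\<^sub>R e) vs) has_derivative (\<lambda>t. hderiv (Suc k) f (w + s *\<^sub>R e) (t *\<^sub>R e # vs))) (at s)" .
  moreover have "(\<lambda>t. hderiv (Suc k) f (w + s *\<^sub>R e) (t *\<^sub>R e # vs)) = (*) (hderiv (Suc k) f (w + s *\<^sub>R e) (e # vs))"
    using linear_scale[OF has_derivative_linear[OF D]] by (auto simp: mult.commute)
  ultimately show ?thesis
    unfolding has_field_derivative_def by simp
qed

lemma has_derivative_hderiv_diagonal:
  fixes f :: "'a::euclidean_space \<Rightarrow> real"
  assumes "hdiff p f" "k < p"
  shows "((\<lambda>x. hderiv (Suc k) f w (replicate (Suc k) (x - w))) has_derivative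
           (\<lambda>v. real (Suc k) * hderiv (Suc k) f w (v # replicate k (x - w)))) (at x)"
proof -
  have "((\<lambda>x. x - w) has_derivative (\<lambda>v. v)) (at x)"
    by (auto intro!: derivative_eq_intros)
  moreover have "Suc k \<le> p"
    using assms(2) by simp
  ultimately show ?thesis
    using has_derivative_compose has_derivative_symmetric_form_diagonal[OF
        multilinear_form_hderiv[OF assms(1)] symmetric_form_hderiv[OF assms(1)]]
    by blast
qed

lemma has_derivative_taylor:
  fixes f :: "'a::euclidean_space \<Rightarrow> real"
  assumes "hdiff p f"
  shows "(taylor p f w has_derivative
           (\<lambda>v. \<Sum>j<p. hderiv (Suc j) f w (v # replicate j (x - w)) / fact j)) (at x)"
proof -
  have "taylor p f w
      = (\<lambda>x. f w + (\<Sum>j<p. 1 / fact (Suc j) * hderiv (Suc j) f w (replicate (Suc j) (x - w))))"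
    by (rule ext) (simp add: taylor_def atLeast0AtMost sum.atMost_shift del: fact_Suc replicate_Suc)
  moreover have "((\<lambda>x. f w + (\<Sum>j<p. 1 / fact (Suc j) * hderiv (Suc j) f w (replicate (Suc j) (x - w))))
      has_derivative (\<lambda>v. 0 + (\<Sum>j<p. 1 / fact (Suc j) *
        (real (Suc j) * hderiv (Suc j) f w (v # replicate j (x - w)))))) (at x)"
    by (intro has_derivative_add has_derivative_const has_derivative_sum has_derivative_mult_right
        has_derivative_hderiv_diagonal[OF assms]) simp
  moreover have "1 / fact (Suc j) * (real (Suc j) * c) = c / fact j" for j c
    by (simp add: fact_Suc[of j] del: fact_Suc)
  ultimately show ?thesis
    by simp
qed

lemma lip_quotient_le_Lip_hderiv:
  assumes "bdd_above (lip_quotients p f)" "x \<noteq> y"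
  shows "tensor_opnorm p (\<lambda>vs. hderiv p f x vs - hderiv p f y vs) / dist x y \<le> Lip_hderiv p f"
  unfolding Lip_hderiv_def using assms by (auto intro!: cSup_upper simp: lip_quotients_def)

lemma Lip_hderiv_nonneg:
  fixes f :: "'a::euclidean_space \<Rightarrow> real"
  assumes "hdiff p f" "bdd_above (lip_quotients p f)"
  shows "0 \<le> Lip_hderiv p f"
proof -
  define b :: 'a where "b = (SOME b. b \<in> Basis)"
  have "0 \<noteq> b"
    unfolding b_def using SOME_Basis nonzero_Basis by metis
  have "0 \<le> tensor_opnorm p (\<lambda>vs. hderiv p f 0 vs - hderiv p f b vs) / dist 0 b"
    using tensor_opnorm_nonneg[OF multilinear_form_diff[OF
        multilinear_form_hderiv[OF assms(1) order_refl] multilinear_form_hderiv[OF assms(1) order_refl]]]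
    by simp
  also have "\<dots> \<le> Lip_hderiv p f"
    using lip_quotient_le_Lip_hderiv[OF assms(2) \<open>0 \<noteq> b\<close>] .
  finally show ?thesis .
qed

lemma abs_hderiv_diff_le:
  fixes f :: "'a::euclidean_space \<Rightarrow> real"
  assumes "hdiff p f" "bdd_above (lip_quotients p f)" "length vs = p"
  shows "\<bar>hderiv p f x vs - hderiv p f y vs\<bar> \<le> Lip_hderiv p f * dist x y * prod_list (map norm vs)"
proof (cases "x = y")
  case True
  then show ?thesis by simp
next
  case False
  have "\<bar>hderiv p f x vs - hderiv p f y vs\<bar>
      \<le> tensor_opnorm p (\<lambda>vs. hderiv p f x vs - hderiv p f y vs) * prod_list (map norm vs)"
    by (rule abs_le_tensor_opnorm[OF multilinear_form_diff[OF multilinear_form_hderiv[OF assms(1) order_refl]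
          multilinear_form_hderiv[OF assms(1) order_refl]] assms(3)])
  also have "\<dots> \<le> Lip_hderiv p f * dist x y * prod_list (map norm vs)"
    using lip_quotient_le_Lip_hderiv[OF assms(2) False] False
    by (intro mult_right_mono) (auto simp: pos_divide_le_eq intro!: prod_list_nonneg)
  finally show ?thesis .
qed

lemma hderiv_one_taylor_error:
  fixes f :: "'a::euclidean_space \<Rightarrow> real"
  assumes "hdiff p f" "bdd_above (lip_quotients p f)" "0 < p"
  shows "\<bar>hderiv 1 f x [d] - (\<Sum>j<p. hderiv (Suc j) f w (d # replicate j (x - w)) / fact j)\<bar>
           \<le> Lip_hderiv p f / fact p * norm (x - w) ^ p * norm d"
proof -
  obtain n where p: "p = Suc n"
    using assms(3) gr0_implies_Suc by blast
  define e where "e = x - w"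
  define F where "F j s = hderiv (Suc j) f (w + s *\<^sub>R e) (replicate j e @ [d])" for j s
  have "DERIV (F m) s :> F (Suc m) s" if "m < n" for m s
    using has_real_derivative_hderiv_line[OF assms(1), of "Suc m" w e "replicate m e @ [d]" s] that p
    unfolding F_def by simp
  moreover have "\<bar>F n s - F n 0\<bar> \<le> Lip_hderiv p f * norm e ^ p * norm d * s" if "0 \<le> s" for s
    using abs_hderiv_diff_le[OF assms(1,2), of "replicate n e @ [d]" "w + s *\<^sub>R e" w] that p
    unfolding F_def by (simp add: dist_norm prod_list_replicate algebra_simps)
  ultimately have "\<bar>F 0 1 - (\<Sum>j\<le>n. F j 0 * 1 ^ j / fact j)\<bar>
      \<le> Lip_hderiv p f * norm e ^ p * norm d * 1 ^ Suc n / fact (Suc n)"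
    by (intro Taylor_Lipschitz_remainder[where T = 1]) auto
  moreover have "(\<Sum>j\<le>n. F j 0 * 1 ^ j / fact j) = (\<Sum>j<p. hderiv (Suc j) f w (d # replicate j e) / fact j)"
    unfolding p lessThan_Suc_atMost
  proof (intro sum.cong refl)
    fix j assume "j \<in> {..n}"
    then have "symmetric_form (Suc j) (hderiv (Suc j) f w)"
      using symmetric_form_hderiv[OF assms(1)] p by simp
    from symmetric_form_replicate_move[OF this, of j 0 e d]
    show "F j 0 * 1 ^ j / fact j = hderiv (Suc j) f w (d # replicate j e) / fact j"
      unfolding F_def by simp
  qed
  moreover have "F 0 1 = hderiv 1 f x [d]"
    unfolding F_def e_def by simp
  ultimately show ?thesis
    unfolding e_def p by simp
qed

section \<open>The regularised Taylor model\<close>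

lemma has_derivative_norm_power:
  fixes x :: "'a::real_inner"
  shows "((\<lambda>y. norm y ^ Suc (Suc k)) has_derivative (\<lambda>v. real (Suc (Suc k)) * norm x ^ k * (x \<bullet> v))) (at x)"
proof (cases "x = 0")
  case False
  have "(v \<bullet> sgn x) * norm x ^ Suc k = norm x ^ k * (x \<bullet> v)" for v
    using False by (simp add: sgn_div_norm inner_commute)
  then have "(\<lambda>v. real (Suc (Suc k)) * (v \<bullet> sgn x) * norm x ^ Suc k)
      = (\<lambda>v. real (Suc (Suc k)) * norm x ^ k * (x \<bullet> v))"
    by (metis mult.assoc)
  moreover have "((\<lambda>y. norm y ^ Suc (Suc k)) has_derivative
      (\<lambda>v. real (Suc (Suc k)) * (v \<bullet> sgn x) * norm x ^ Suc k)) (at x)"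
    using has_derivative_power[OF has_derivative_norm[OF False], of "Suc (Suc k)"] by simp
  ultimately show ?thesis
    by simp
next
  case True
  have "((\<lambda>y::'a. norm y ^ Suc k) \<longlongrightarrow> 0) (at 0)"
    by (auto intro!: tendsto_eq_intros)
  moreover have "\<forall>\<^sub>F y in at (0::'a). norm y ^ Suc k = norm y ^ Suc (Suc k) / norm y"
    by (auto simp: eventually_at_filter)
  ultimately have "((\<lambda>y::'a. norm y ^ Suc (Suc k)) has_derivative (\<lambda>v. 0)) (at 0)"
    unfolding has_derivative_iff_norm by (simp add: tendsto_cong)
  then show ?thesis
    using True by simp
qed

lemma has_derivative_regularizer:
  fixes w x :: "'a::real_inner"
  assumes "0 < p" "0 \<le> c"
  obtains R' where "((\<lambda>y. c / fact (p + 1) * norm (y - w) ^ (p + 1)) has_derivative R') (at x)"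
    and "\<And>v. \<bar>R' v\<bar> \<le> c / fact p * norm (x - w) ^ p * norm v"
proof -
  obtain n where p: "p = Suc n"
    using assms(1) gr0_implies_Suc by blast
  define R' where "R' v = c / fact (p + 1) * (real (p + 1) * norm (x - w) ^ n * ((x - w) \<bullet> v))" for v
  have "((\<lambda>y. y - w) has_derivative (\<lambda>v. v)) (at x)"
    by (auto intro!: derivative_eq_intros)
  from has_derivative_compose[OF this has_derivative_norm_power]
  have "((\<lambda>y. norm (y - w) ^ (p + 1)) has_derivative (\<lambda>v. real (p + 1) * norm (x - w) ^ n * ((x - w) \<bullet> v))) (at x)"
    unfolding p by simp
  then have "((\<lambda>y. c / fact (p + 1) * norm (y - w) ^ (p + 1)) has_derivative R') (at x)"
    unfolding R'_def by (rule has_derivative_mult_right)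
  moreover have "\<bar>R' v\<bar> \<le> c / fact p * norm (x - w) ^ p * norm v" for v
  proof -
    have "c / fact (p + 1) * real (p + 1) = c / fact p"
      by (simp add: fact_Suc[of p] del: fact_Suc)
    then have "\<bar>R' v\<bar> = c / fact p * norm (x - w) ^ n * \<bar>(x - w) \<bullet> v\<bar>"
      using assms(2) unfolding R'_def by (simp add: abs_mult mult.assoc)
    also have "\<dots> \<le> c / fact p * norm (x - w) ^ n * (norm (x - w) * norm v)"
      using assms(2) Cauchy_Schwarz_ineq2[of "x - w" v] by (intro mult_left_mono) auto
    finally show ?thesis
      unfolding p by (simp add: mult.assoc mult.left_commute)
  qed
  ultimately show ?thesis
    using that by blast
qed

lemma regularized_taylor_model_error_derivative:
  fixes f :: "'a::euclidean_space \<Rightarrow> real"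
  assumes "hdiff p f" "bdd_above (lip_quotients p f)" "0 < p"
  obtains h' where
    "((\<lambda>y. taylor p f w y + Lip_hderiv p f / fact (p + 1) * norm (y - w) ^ (p + 1) - f y) has_derivative h') (at x)"
    "\<And>v. \<bar>h' v\<bar> \<le> 2 * Lip_hderiv p f / fact p * norm (x - w) ^ p * norm v"
proof -
  let ?L = "Lip_hderiv p f"
  define T' where "T' v = (\<Sum>j<p. hderiv (Suc j) f w (v # replicate j (x - w)) / fact j)" for v
  obtain R' where dR: "((\<lambda>y. ?L / fact (p + 1) * norm (y - w) ^ (p + 1)) has_derivative R') (at x)"
    and bR: "\<And>v. \<bar>R' v\<bar> \<le> ?L / fact p * norm (x - w) ^ p * norm v"
    using has_derivative_regularizer[OF assms(3) Lip_hderiv_nonneg[OF assms(1,2)]] by blast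
  have "(f has_derivative (\<lambda>v. hderiv 1 f x [v])) (at x)"
    using has_derivative_hderiv[OF assms(1), of 0 "[]" x] assms(3) by simp
  then have "((\<lambda>y. taylor p f w y + ?L / fact (p + 1) * norm (y - w) ^ (p + 1) - f y) has_derivative
      (\<lambda>v. T' v + R' v - hderiv 1 f x [v])) (at x)"
    unfolding T'_def by (intro has_derivative_diff has_derivative_add has_derivative_taylor[OF assms(1)] dR)
  moreover have "\<bar>T' v + R' v - hderiv 1 f x [v]\<bar> \<le> 2 * ?L / fact p * norm (x - w) ^ p * norm v" for v
  proof -
    have "\<bar>T' v - hderiv 1 f x [v]\<bar> \<le> ?L / fact p * norm (x - w) ^ p * norm v"
      using hderiv_one_taylor_error[OF assms, of x v w] unfolding T'_def by (simp add: abs_minus_commute)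
    then show ?thesis
      using bR[of v] abs_triangle_ineq[of "T' v - hderiv 1 f x [v]" "R' v"] by simp
  qed
  ultimately show ?thesis
    using that by blast
qed

section \<open>Subgradients and gradient growth\<close>

lemma convex_on_if_subdiff_nonempty:
  fixes \<psi> :: "'a::real_inner \<Rightarrow> real"
  assumes "\<And>x. subdiff \<psi> x \<noteq> {}"
  shows "convex_on UNIV \<psi>"
proof (rule convex_onI)
  fix t :: real and x y :: 'a assume "0 < t" "t < 1"
  define z where "z = (1 - t) *\<^sub>R x + t *\<^sub>R y"
  obtain g where "g \<in> subdiff \<psi> z"
    using assms by blast
  then have "(1 - t) * (\<psi> z + g \<bullet> (x - z)) \<le> (1 - t) * \<psi> x" "t * (\<psi> z + g \<bullet> (y - z)) \<le> t * \<psi> y"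
    using \<open>0 < t\<close> \<open>t < 1\<close> unfolding subdiff_def by (auto intro!: mult_left_mono)
  moreover have "(1 - t) * (\<psi> z + g \<bullet> (x - z)) + t * (\<psi> z + g \<bullet> (y - z)) = \<psi> z"
    unfolding z_def by (simp add: inner_diff_right inner_add_right algebra_simps)
  ultimately show "\<psi> ((1 - t) *\<^sub>R x + t *\<^sub>R y) \<le> (1 - t) * \<psi> x + t * \<psi> y"
    unfolding z_def by linarith
qed simp

lemma derivative_in_subdiff:
  fixes \<psi> h :: "'a::real_inner \<Rightarrow> real"
  assumes "convex_on UNIV \<psi>"
    and "\<And>z. h z - h x \<le> \<psi> z - \<psi> x"
    and "(h has_derivative (\<lambda>v. u \<bullet> v)) (at x)"
  shows "u \<in> subdiff \<psi> x"
  unfolding subdiff_def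
proof (intro CollectI allI)
  fix y
  define v where "v = y - x"
  have "((\<lambda>t. x + t *\<^sub>R v) has_derivative (\<lambda>t. t *\<^sub>R v)) (at 0)"
    by (auto intro!: derivative_eq_intros)
  from has_derivative_compose[OF this, of h "(\<bullet>) u"] assms(3)
  have "((\<lambda>t. h (x + t *\<^sub>R v)) has_derivative (\<lambda>t. u \<bullet> (t *\<^sub>R v))) (at 0)"
    by simp
  moreover have "(\<lambda>t. u \<bullet> (t *\<^sub>R v)) = (*) (u \<bullet> v)"
    by (auto simp: mult.commute)
  ultimately have "((\<lambda>t. h (x + t *\<^sub>R v)) has_real_derivative u \<bullet> v) (at 0)"
    unfolding has_field_derivative_def by simp
  then have lim: "((\<lambda>t. (h (x + t *\<^sub>R v) - h x) / t) \<longlongrightarrow> u \<bullet> v) (at_right 0)"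
    unfolding has_field_derivative_iff by (auto intro: tendsto_mono[OF at_le])
  have "(h (x + t *\<^sub>R v) - h x) / t \<le> \<psi> y - \<psi> x" if "0 < t" "t < 1" for t
  proof -
    have "x + t *\<^sub>R v = (1 - t) *\<^sub>R x + t *\<^sub>R y"
      unfolding v_def by (simp add: algebra_simps)
    then have "h (x + t *\<^sub>R v) - h x \<le> (1 - t) * \<psi> x + t * \<psi> y - \<psi> x"
      using assms(2)[of "x + t *\<^sub>R v"] convex_onD[OF assms(1), of t x y] that by simp
    then have "h (x + t *\<^sub>R v) - h x \<le> (\<psi> y - \<psi> x) * t"
      by (simp add: algebra_simps)
    then show ?thesis
      using that by (simp add: pos_divide_le_eq)
  qed
  then have "u \<bullet> v \<le> \<psi> y - \<psi> x"
    by (intro tendsto_upperbound[OF lim]) (auto simp: eventually_at_right_field intro!: exI[of _ 1])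
  then show "\<psi> x + u \<bullet> (y - x) \<le> \<psi> y"
    unfolding v_def by simp
qed

(* For r = 0 this relies on 0 powr a = 0, also when a < 0. *)
lemma powr_diff_one_le_divide:
  fixes r :: real
  assumes "0 \<le> r" "0 < \<mu>" "0 \<le> K" "\<mu> * r powr q \<le> K * r"
  shows "r powr (q - 1) \<le> K / \<mu>"
proof (cases "r = 0")
  case True
  then show ?thesis
    using assms(2,3) by simp
next
  case False
  then have "0 < r"
    using assms(1) by simp
  then have "r powr q = r powr (q - 1) * r"
    using powr_add[of r "q - 1" 1] by simp
  then have "\<mu> * r powr (q - 1) \<le> K"
    using assms(4) \<open>0 < r\<close> by (simp add: mult.assoc mult_le_cancel_right_pos)
  then show ?thesis
    using assms(2) by (simp add: pos_le_divide_eq mult.commute)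
qed

lemma gradient_growth_minimizer_dist:
  fixes \<psi> f :: "'a::euclidean_space \<Rightarrow> real"
  assumes growth: "gradient_growth (\<lambda>r. \<mu> * r powr q) \<psi>" and "0 < \<mu>"
    and "\<And>x. \<psi> x1 \<le> \<psi> x" and "\<And>x. f x0 \<le> f x"
    and deriv: "((\<lambda>x. \<psi> x - f x) has_derivative h') (at x0)"
    and bound: "\<And>v. \<bar>h' v\<bar> \<le> K * norm v"
  shows "norm (x0 - x1) powr (q - 1) \<le> K / \<mu>"
proof -
  define u where "u = adjoint h' 1"
  have h': "h' = (\<lambda>v. u \<bullet> v)"
    using adjoint_works[OF has_derivative_linear[OF deriv]] unfolding u_def
    by (auto simp: inner_commute)
  have "u \<in> subdiff \<psi> x0"
  proof (rule derivative_in_subdiff[OF convex_on_if_subdiff_nonempty])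
    show "subdiff \<psi> x \<noteq> {}" for x
      using growth unfolding gradient_growth_def by blast
    show "(\<psi> z - f z) - (\<psi> x0 - f x0) \<le> \<psi> z - \<psi> x0" for z
      using assms(4)[of z] by simp
  qed (use deriv h' in simp)
  moreover have "0 \<in> subdiff \<psi> x1"
    unfolding subdiff_def using assms(3) by simp
  ultimately have "\<mu> * norm (x1 - x0) powr q \<le> (x0 - x1) \<bullet> (u - 0)"
    using growth unfolding gradient_growth_def by blast
  also have "\<dots> \<le> K * norm (x0 - x1)"
    using bound[of "x0 - x1"] unfolding h' by (simp add: inner_commute)
  finally have "\<mu> * norm (x0 - x1) powr q \<le> K * norm (x0 - x1)"
    by (simp add: norm_minus_commute)
  moreover have "0 \<le> K"
    using bound[of "SOME b. b \<in> Basis"] by simp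
  ultimately show ?thesis
    using \<open>0 < \<mu>\<close> by (intro powr_diff_one_le_divide) auto
qed

theorem lemma5:
  fixes \<phi> \<phi>0 :: "real^'d \<Rightarrow> real" and p :: nat and w x\<phi> xh :: "real^'d"
    and \<mu> q :: real
  assumes "p \<ge> 1"
    and "hdiff p \<phi>"
    and "bdd_above (lip_quotients p \<phi>)"
    and "\<forall>x. \<phi> x\<phi> + \<phi>0 x\<phi> \<le> \<phi> x + \<phi>0 x"
    and "\<forall>x. taylor p \<phi> w xh + Lip_hderiv p \<phi> / fact (p + 1) * norm (xh - w) ^ (p + 1) + \<phi>0 xh
            \<le> taylor p \<phi> w x + Lip_hderiv p \<phi> / fact (p + 1) * norm (x - w) ^ (p + 1) + \<phi>0 x"
    and "\<mu> > 0" and "q > 0"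
    and "gradient_growth (\<lambda>r. \<mu> * r powr q)
           (\<lambda>x. taylor p \<phi> w x + Lip_hderiv p \<phi> / fact (p + 1) * norm (x - w) ^ (p + 1) + \<phi>0 x)"
  shows "norm (x\<phi> - xh) powr (q - 1)
           \<le> 2 * Lip_hderiv p \<phi> / \<mu> * (1 / fact p) * norm (x\<phi> - w) ^ p"
proof -
  let ?L = "Lip_hderiv p \<phi>"
  obtain h' where
    deriv: "((\<lambda>y. taylor p \<phi> w y + ?L / fact (p + 1) * norm (y - w) ^ (p + 1) - \<phi> y) has_derivative h') (at x\<phi>)"
    and bound: "\<And>v. \<bar>h' v\<bar> \<le> 2 * ?L / fact p * norm (x\<phi> - w) ^ p * norm v"
    using regularized_taylor_model_error_derivative[OF assms(2,3)] assms(1) by auto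
  have "(\<lambda>y. (taylor p \<phi> w y + ?L / fact (p + 1) * norm (y - w) ^ (p + 1) + \<phi>0 y) - (\<phi> y + \<phi>0 y))
      = (\<lambda>y. taylor p \<phi> w y + ?L / fact (p + 1) * norm (y - w) ^ (p + 1) - \<phi> y)"
    by auto
  then have "norm (x\<phi> - xh) powr (q - 1) \<le> 2 * ?L / fact p * norm (x\<phi> - w) ^ p / \<mu>"
    using gradient_growth_minimizer_dist[OF assms(8,6), of xh "\<lambda>y. \<phi> y + \<phi>0 y" x\<phi> h'
        "2 * ?L / fact p * norm (x\<phi> - w) ^ p"] assms(4,5) deriv bound
    by auto
  then show ?thesis
    by (simp add: field_simps)
qed

end
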